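(* Consider a discrete-time system over $t=0,\dots,T$ with dynamics $x_0=f_0(\delta_0)$, $x_t=f_t(x_{t-1},u_{t-1},\delta_t)$ for $t=1,\dots,T$, and measured outputs $y_0=g_0(x_0,\delta_0)$, $y_t=g_t(x_t,u_{t-1},\delta_t)$ for $t=1,\dots,T-1$, where $u_t$ are control inputs and $\delta_t$ exogenous inputs. Let $\psi_t$ be the input-output maps defined by $y_t=\psi_t(u_{0:t-1},\delta_{0:t})$ (obtained by iterating the dynamics), with $\psi_0(\delta_0)=g_0(f_0(\delta_0),\delta_0)$. Suppose the system is purifiable, i.e., for each $t=1,\dots,T-1$ there exist mappings $p_t,q_t,\xi_t$ such that for all $u_{0:t-1}$ and $\delta_{0:t}$, \[ p_t(\psi_{0:t}(u_{0:t-1},\delta_{0:t}),u_{0:t-1})=\xi_t(\delta_{0:t}) \iff q_t(\xi_{0:t}(\delta_{0:t}),u_{0:t-1})=\psi_t(u_{0:t-1},\delta_{0:t}), \] and set $p_0(y_0)=y_0$, $q_0(e_0)=e_0$, $\xi_0(\delta_0)=g_0(f_0(\delta_0),\delta_0)$. Let $e_t=\xi_t(\delta_{0:t})$ (the purified output) and $e=\xi(\delta)=(e_0,\dots,e_{T-1})$. Then there is a one-to-one correspondence between causal output feedback policies $\pi=(\pi_0,\dots,\pi_{T-1})$, $u_t=\pi_t(y_{0:t})$, and causal policies $Q=(Q_0,\dots,Q_{T-1})$ in the purified output, $u_t=Q_t(e_{0:t})$. Moreover, given a causal $Q$ in $e$, the unique corresponding causal $\pi$ in $y$ is given by the recursion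 \[ \pi_0(y_0)=Q_0(y_0),\qquad \pi_t(y_{0:t})=Q_t\big(p_{0:t}(y_{0:t},\pi_{0:t-1}(y_{0:t-1}))\big),\quad t=1,\dots,T-1. \]
   Context: Subscripts $t_1:t_2$ denote trajectories, e.g. $\delta_{0:t}=(\delta_0,\dots,\delta_t)$, $u_{0:t-1}=(u_0,\dots,u_{t-1})$. The notation $p_{0:t}(y_{0:t},u_{0:t-1})$ denotes the vector $(p_0(y_0),p_1(y_{0:1},u_0),\dots,p_t(y_{0:t},u_{0:t-1}))$, and similarly $\psi_{0:t}$, $\xi_{0:t}$, $\pi_{0:t-1}(y_{0:t-1})=(\pi_0(y_0),\dots,\pi_{t-1}(y_{0:t-1}))$. A policy is causal if its $t$-th component depends only on the arguments up to time $t$. A policy $\pi$ in $y$ and a policy $Q$ in $e$ correspond when they generate the same closed-loop control inputs, i.e., $u_t=\pi_t(y_{0:t})$ for all $t$ exactly when $u_t=Q_t(e_{0:t})$ for all $t$, for every exogenous input trajectory. *)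

theory Defs
  imports Main
begin

(* Trajectories are functions nat => 'a; a map on the finite trajectory a_{0:n}
   is rendered as a function on whole trajectories that depends only on a_0..a_n. *)

definition depends_upto :: "nat \<Rightarrow> ((nat \<Rightarrow> 'a) \<Rightarrow> 'b) \<Rightarrow> bool" where
  "depends_upto n F \<longleftrightarrow> (\<forall>a b. (\<forall>i\<le>n. a i = b i) \<longrightarrow> F a = F b)"

definition depends_upto2 :: "nat \<Rightarrow> nat \<Rightarrow> ((nat \<Rightarrow> 'a) \<Rightarrow> (nat \<Rightarrow> 'c) \<Rightarrow> 'b) \<Rightarrow> bool" where
  "depends_upto2 n m F \<longleftrightarrow>
     (\<forall>a b c d. (\<forall>i\<le>n. a i = b i) \<longrightarrow> (\<forall>i<m. c i = d i) \<longrightarrow> F a c = F b d)"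

definition causal_policy :: "nat \<Rightarrow> (nat \<Rightarrow> (nat \<Rightarrow> 'a) \<Rightarrow> 'u) \<Rightarrow> bool" where
  "causal_policy T P \<longleftrightarrow> (\<forall>t<T. depends_upto t (P t))"

primrec state :: "('d \<Rightarrow> 'x) \<Rightarrow> (nat \<Rightarrow> 'x \<Rightarrow> 'u \<Rightarrow> 'd \<Rightarrow> 'x)
                  \<Rightarrow> (nat \<Rightarrow> 'u) \<Rightarrow> (nat \<Rightarrow> 'd) \<Rightarrow> nat \<Rightarrow> 'x" where
  "state f0 f u d 0 = f0 (d 0)"
| "state f0 f u d (Suc t) = f (Suc t) (state f0 f u d t) (u t) (d (Suc t))"

definition psi :: "('d \<Rightarrow> 'x) \<Rightarrow> (nat \<Rightarrow> 'x \<Rightarrow> 'u \<Rightarrow> 'd \<Rightarrow> 'x)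
                  \<Rightarrow> ('x \<Rightarrow> 'd \<Rightarrow> 'y) \<Rightarrow> (nat \<Rightarrow> 'x \<Rightarrow> 'u \<Rightarrow> 'd \<Rightarrow> 'y)
                  \<Rightarrow> nat \<Rightarrow> (nat \<Rightarrow> 'u) \<Rightarrow> (nat \<Rightarrow> 'd) \<Rightarrow> 'y" where
  "psi f0 f g0 g t u d =
     (if t = 0 then g0 (state f0 f u d 0) (d 0)
      else g t (state f0 f u d t) (u (t - 1)) (d t))"

definition corresponds ::
  "nat \<Rightarrow> (nat \<Rightarrow> (nat \<Rightarrow> 'u) \<Rightarrow> (nat \<Rightarrow> 'd) \<Rightarrow> 'y) \<Rightarrow> (nat \<Rightarrow> (nat \<Rightarrow> 'd) \<Rightarrow> 'e)
   \<Rightarrow> (nat \<Rightarrow> (nat \<Rightarrow> 'y) \<Rightarrow> 'u) \<Rightarrow> (nat \<Rightarrow> (nat \<Rightarrow> 'e) \<Rightarrow> 'u) \<Rightarrow> bool" where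
  "corresponds T Psi Xi Pi Q \<longleftrightarrow>
     (\<forall>d u. (\<forall>t<T. u t = Pi t (\<lambda>i. Psi i u d)) \<longleftrightarrow> (\<forall>t<T. u t = Q t (\<lambda>i. Xi i d)))"

function pi_of_Q :: "(nat \<Rightarrow> (nat \<Rightarrow> 'y) \<Rightarrow> 'u) \<Rightarrow> (nat \<Rightarrow> (nat \<Rightarrow> 'y) \<Rightarrow> (nat \<Rightarrow> 'u) \<Rightarrow> 'y)
                     \<Rightarrow> nat \<Rightarrow> (nat \<Rightarrow> 'y) \<Rightarrow> 'u" where
  "pi_of_Q Q p t y =
     Q t (\<lambda>s. if s \<le> t then p s y (\<lambda>i. if i < s then pi_of_Q Q p i y else undefined)
              else undefined)"
  by auto
termination by (relation "measure (\<lambda>(Q, p, t, y). t)") auto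

end

theory Submission
  imports Defs
begin

text \<open>
  Along any closed loop the inputs \<open>u\<^sub>0, \<dots>, u\<^sub>t\<^sub>-\<^sub>1\<close> are already fixed by the policy, and
  \<open>p\<^sub>t(y\<^sub>0\<^sub>:\<^sub>t, u\<^sub>0\<^sub>:\<^sub>t\<^sub>-\<^sub>1) = e\<^sub>t\<close>, so a policy \<open>Q\<close> in \<open>e\<close> can be run on measured outputs by
  recomputing the purified outputs from the outputs and the inputs that the policy itself
  issued; this is the recursion \<open>pi_of_Q Q p\<close>. Conversely \<open>q\<^sub>t(e\<^sub>0\<^sub>:\<^sub>t, u\<^sub>0\<^sub>:\<^sub>t\<^sub>-\<^sub>1) = y\<^sub>t\<close>, so the same
  recursion \<open>pi_of_Q \<pi> q\<close> turns a policy \<open>\<pi>\<close> in \<open>y\<close> into one in \<open>e\<close>. Uniqueness holds because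
  corresponding policies produce the same closed-loop inputs.
\<close>

declare pi_of_Q.simps[simp del]

lemma depends_uptoD: "depends_upto n F \<Longrightarrow> (\<And>i. i \<le> n \<Longrightarrow> a i = b i) \<Longrightarrow> F a = F b"
  unfolding depends_upto_def by blast

lemma depends_upto2D:
  "depends_upto2 n m F \<Longrightarrow> (\<And>i. i \<le> n \<Longrightarrow> a i = b i) \<Longrightarrow> (\<And>i. i < m \<Longrightarrow> c i = d i)
    \<Longrightarrow> F a c = F b d"
  unfolding depends_upto2_def by blast

lemma causal_policy_pi_of_Q:
  assumes P_causal: "\<And>s. s < T \<Longrightarrow> depends_upto2 s s (P s)"
  shows "causal_policy T (pi_of_Q Q P)"
proof -
  have "pi_of_Q Q P t y = pi_of_Q Q P t y'" if "t < T" "\<forall>i\<le>t. y i = y' i" for t y y'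
    using that
  proof (induction t arbitrary: y y' rule: less_induct)
    case (less t)
    have "P s y (\<lambda>i. if i < s then pi_of_Q Q P i y else undefined)
        = P s y' (\<lambda>i. if i < s then pi_of_Q Q P i y' else undefined)" if "s \<le> t" for s
    proof (rule depends_upto2D[OF P_causal])
      show "i < s \<Longrightarrow> (if i < s then pi_of_Q Q P i y else undefined)
                   = (if i < s then pi_of_Q Q P i y' else undefined)" for i
        using less that by simp
    qed (use less that in auto)
    then show ?case
      by (subst (1 2) pi_of_Q.simps) (intro arg_cong[where f = "Q t"] ext, simp)
  qed
  then show ?thesis
    unfolding causal_policy_def depends_upto_def by blast
qed

lemma pi_of_Q_eq_on_closed_loop:
  assumes P_causal: "\<And>s. s \<le> t \<Longrightarrow> depends_upto2 s s (P s)"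
    and P_maps: "\<And>s. s \<le> t \<Longrightarrow> P s Y u = E s"
    and Q_causal: "depends_upto t (Q t)"
    and issued: "\<And>i. i < t \<Longrightarrow> pi_of_Q Q P i Y = u i"
  shows "pi_of_Q Q P t Y = Q t E"
proof -
  have "P s Y (\<lambda>i. if i < s then pi_of_Q Q P i Y else undefined) = E s" if "s \<le> t" for s
  proof -
    have "P s Y (\<lambda>i. if i < s then pi_of_Q Q P i Y else undefined) = P s Y u"
      by (rule depends_upto2D[OF P_causal[OF that]]) (use issued that in auto)
    also have "\<dots> = E s"
      using P_maps that .
    finally show ?thesis .
  qed
  then show ?thesis
    by (subst pi_of_Q.simps) (rule depends_uptoD[OF Q_causal], simp)
qed

lemma closed_loop_pi_of_Q_iff:
  assumes P_causal: "\<And>s. s < T \<Longrightarrow> depends_upto2 s s (P s)"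
    and P_maps: "\<And>s. s < T \<Longrightarrow> P s Y u = E s"
    and Q_causal: "causal_policy T Q"
  shows "(\<forall>t<T. u t = pi_of_Q Q P t Y) \<longleftrightarrow> (\<forall>t<T. u t = Q t E)"
proof -
  have step: "pi_of_Q Q P t Y = Q t E"
    if "t < T" "\<And>i. i < t \<Longrightarrow> pi_of_Q Q P i Y = u i" for t
    using that Q_causal
    by (intro pi_of_Q_eq_on_closed_loop) (auto simp: P_causal P_maps causal_policy_def)
  show ?thesis
  proof
    assume pi_loop: "\<forall>t<T. u t = pi_of_Q Q P t Y"
    show "\<forall>t<T. u t = Q t E"
    proof (intro allI impI)
      fix t
      assume "t < T"
      have "pi_of_Q Q P t Y = Q t E"
        by (rule step) (use \<open>t < T\<close> pi_loop in auto)
      with \<open>t < T\<close> pi_loop show "u t = Q t E"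
        by simp
    qed
  next
    assume Q_loop: "\<forall>t<T. u t = Q t E"
    have "t < T \<Longrightarrow> pi_of_Q Q P t Y = u t" for t
    proof (induction t rule: less_induct)
      case (less t)
      have "pi_of_Q Q P t Y = Q t E"
        by (rule step) (use less in auto)
      with less.prems Q_loop show ?case
        by simp
    qed
    then show "\<forall>t<T. u t = pi_of_Q Q P t Y"
      by simp
  qed
qed

lemma correspondsD:
  "corresponds T Psi Xi \<pi> Q \<Longrightarrow>
    (\<forall>t<T. u t = \<pi> t (\<lambda>i. Psi i u d)) \<longleftrightarrow> (\<forall>t<T. u t = Q t (\<lambda>i. Xi i d))"
  unfolding corresponds_def by blast

lemma corresponds_closed_loop:
  assumes "corresponds T Psi Xi \<pi> Q" "t < T"
  shows "\<pi> t (\<lambda>i. Psi i (\<lambda>s. Q s (\<lambda>i. Xi i d)) d) = Q t (\<lambda>i. Xi i d)"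
proof -
  let ?u = "\<lambda>s. Q s (\<lambda>i. Xi i d)"
  have "\<forall>s<T. ?u s = \<pi> s (\<lambda>i. Psi i ?u d)"
    using correspondsD[OF assms(1), of ?u d] by blast
  from this[rule_format, OF assms(2)] show ?thesis
    by (rule sym)
qed

lemma corresponds_unique_on_closed_loop:
  assumes "corresponds T Psi Xi \<pi> Q" "corresponds T Psi Xi \<pi>' Q" "t < T"
  shows "let u = (\<lambda>s. Q s (\<lambda>i. Xi i d)) in \<pi> t (\<lambda>i. Psi i u d) = \<pi>' t (\<lambda>i. Psi i u d)"
  unfolding Let_def
  using corresponds_closed_loop[OF assms(1,3)] corresponds_closed_loop[OF assms(2,3)] by simp

lemma corresponds_unique_purified:
  assumes "corresponds T Psi Xi \<pi> Q" "corresponds T Psi Xi \<pi> Q'" "t < T"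
  shows "Q t (\<lambda>i. Xi i d) = Q' t (\<lambda>i. Xi i d)"
proof -
  let ?u = "\<lambda>s. Q s (\<lambda>i. Xi i d)"
  have "?u s = \<pi> s (\<lambda>i. Psi i ?u d)" if "s < T" for s
    using corresponds_closed_loop[OF assms(1) that] by (rule sym)
  then have "\<forall>s<T. ?u s = Q' s (\<lambda>i. Xi i d)"
    using correspondsD[OF assms(2), of ?u d] by blast
  then show ?thesis
    using assms(3) by blast
qed

theorem theorem2:
  fixes T :: nat
    and f0 :: "'d \<Rightarrow> 'x" and f :: "nat \<Rightarrow> 'x \<Rightarrow> 'u \<Rightarrow> 'd \<Rightarrow> 'x"
    and g0 :: "'x \<Rightarrow> 'd \<Rightarrow> 'y" and g :: "nat \<Rightarrow> 'x \<Rightarrow> 'u \<Rightarrow> 'd \<Rightarrow> 'y"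
    and p :: "nat \<Rightarrow> (nat \<Rightarrow> 'y) \<Rightarrow> (nat \<Rightarrow> 'u) \<Rightarrow> 'y"
    and q :: "nat \<Rightarrow> (nat \<Rightarrow> 'y) \<Rightarrow> (nat \<Rightarrow> 'u) \<Rightarrow> 'y"
    and \<xi> :: "nat \<Rightarrow> (nat \<Rightarrow> 'd) \<Rightarrow> 'y"
  assumes p_causal: "\<And>t. 1 \<le> t \<Longrightarrow> t < T \<Longrightarrow> depends_upto2 t t (p t)"
    and q_causal: "\<And>t. 1 \<le> t \<Longrightarrow> t < T \<Longrightarrow> depends_upto2 t t (q t)"
    and xi_causal: "\<And>t. 1 \<le> t \<Longrightarrow> t < T \<Longrightarrow> depends_upto t (\<xi> t)"
    and purifiable: "\<And>t u d. 1 \<le> t \<Longrightarrow> t < T \<Longrightarrow>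
          p t (\<lambda>i. psi f0 f g0 g i u d) u = \<xi> t d
        \<and> q t (\<lambda>i. \<xi> i d) u = psi f0 f g0 g t u d"
    and p0: "p 0 = (\<lambda>y u. y 0)"
    and q0: "q 0 = (\<lambda>e u. e 0)"
    and xi0: "\<xi> 0 = (\<lambda>d. g0 (f0 (d 0)) (d 0))"
  shows
    "(\<forall>Q. causal_policy T Q \<longrightarrow>
        causal_policy T (pi_of_Q Q p) \<and> corresponds T (psi f0 f g0 g) \<xi> (pi_of_Q Q p) Q)
   \<and> (\<forall>\<pi>. causal_policy T \<pi> \<longrightarrow>
        (\<exists>Q. causal_policy T Q \<and> corresponds T (psi f0 f g0 g) \<xi> \<pi> Q))
   \<and> (\<forall>Q \<pi> \<pi>'. causal_policy T Q \<longrightarrow> causal_policy T \<pi> \<longrightarrow> causal_policy T \<pi>' \<longrightarrow>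
        corresponds T (psi f0 f g0 g) \<xi> \<pi> Q \<longrightarrow> corresponds T (psi f0 f g0 g) \<xi> \<pi>' Q \<longrightarrow>
        (\<forall>d t. t < T \<longrightarrow>
           (let u = (\<lambda>s. Q s (\<lambda>i. \<xi> i d)) in
              \<pi> t (\<lambda>i. psi f0 f g0 g i u d) = \<pi>' t (\<lambda>i. psi f0 f g0 g i u d))))
   \<and> (\<forall>\<pi> Q Q'. causal_policy T \<pi> \<longrightarrow> causal_policy T Q \<longrightarrow> causal_policy T Q' \<longrightarrow>
        corresponds T (psi f0 f g0 g) \<xi> \<pi> Q \<longrightarrow> corresponds T (psi f0 f g0 g) \<xi> \<pi> Q' \<longrightarrow>
        (\<forall>d t. t < T \<longrightarrow> Q t (\<lambda>i. \<xi> i d) = Q' t (\<lambda>i. \<xi> i d)))"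
proof -
  let ?psi = "psi f0 f g0 g"
  have psi0: "?psi 0 u d = \<xi> 0 d" for u d
    by (simp add: psi_def xi0)
  have p_causal': "depends_upto2 s s (p s)" and q_causal': "depends_upto2 s s (q s)"
    if "s < T" for s
    using that p_causal[of s] q_causal[of s]
    by (cases "s = 0"; simp add: p0 q0 depends_upto2_def)+
  have p_purifies: "p s (\<lambda>i. ?psi i u d) u = \<xi> s d"
    and q_restores: "q s (\<lambda>i. \<xi> i d) u = ?psi s u d" if "s < T" for s u d
    using that purifiable[of s u d]
    by (cases "s = 0"; simp add: p0 q0 psi0)+
  have "causal_policy T (pi_of_Q Q p) \<and> corresponds T ?psi \<xi> (pi_of_Q Q p) Q"
    if "causal_policy T Q" for Q
    unfolding corresponds_def
    by (intro conjI causal_policy_pi_of_Q allI closed_loop_pi_of_Q_iff)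
      (simp_all add: p_causal' p_purifies that)
  moreover have "causal_policy T (pi_of_Q \<pi> q) \<and> corresponds T ?psi \<xi> \<pi> (pi_of_Q \<pi> q)"
    if "causal_policy T \<pi>" for \<pi>
    unfolding corresponds_def
    by (intro conjI causal_policy_pi_of_Q allI closed_loop_pi_of_Q_iff[symmetric])
      (simp_all add: q_causal' q_restores that)
  ultimately show ?thesis
    by (intro conjI allI impI) (blast, blast, blast,
      metis corresponds_unique_on_closed_loop, metis corresponds_unique_purified)
qed

end
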